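(* Consider the plant $\dot x=f(x,u)$ with $f$ satisfying Assumption 1, a DT control law $U:\mathbb{R}^n\times[0,\infty)\to\mathbb{R}^m$, and $u_c(x):=U(x,0)$ satisfying Assumption 2. Suppose $U$ is StL and $(U_c,U)$ is StC with $U_c(x,T):=u_c(x)$. Then $H^e$ is EPC with $\bar F^e_U$, where $H^e(x,T)$ is the time-$T$ value of the solution of $\dot x=h(x):=f(x,u_c(x))$ from $x$, and $\bar F^e_U(x,T):=F^e(x,U(x,T),T)$.
   Context: Assumption 1: $f(0,0)=0$ and for every $M,M_u\ge0$ there is $L>0$ with $|f(x,u)-f(y,v)|\le L(|x-y|+|u-v|)$ for $|x|,|y|\le M$, $|u|,|v|\le M_u$. Assumption 2: $u_c(0)=0$ and for every $M\ge0$ there is $L>0$ with $|u_c(x)-u_c(y)|\le L|x-y|$ for $|x|,|y|\le M$. $F^e(x,u,T)$: time-$T$ value of the solution of $\dot z=f(z,u)$, $u$ constant, $z(0)=x$. StL: for each $M\ge0$ there exist $K(M)>0$, $T^*(M)>0$ ($T^*$ nonincreasing) with $U(0,T)=0$ and $|U(x,T)-U(y,T)|\le K|x-y|$ for $|x|,|y|\le M$, $T\in[0,T^* )$. StC: $(U,V)$ is StC if for each $M\ge0$ there exist $\rho\in\mathcal{K}_\infty$, $T^*(M)>0$ with $|U(x,T)-V(x,T)|\le\rho(T)|x|$ for $|x|\le M$, $T\in[0,T^* )$. EPC: $\bar F^a$ is EPC with $\bar F^b$ if for each $M\ge0$ there exist $K(M)>0$, $T^*(M)>0$, $\rho\in\mathcal{K}_\infty$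 with $|\bar F^a(x,T)-\bar F^b(y,T)|\le(1+KT)|x-y|+T\rho(T)\max\{|x|,|y|\}$ for all $|x|,|y|\le M$, $T\in(0,T^* )$. *)

theory Defs
  imports "HOL-Analysis.Analysis"
begin

definition class_K_inf :: "(real \<Rightarrow> real) \<Rightarrow> bool" where
  "class_K_inf \<rho> \<longleftrightarrow> continuous_on {0..} \<rho> \<and> \<rho> 0 = 0 \<and>
     strict_mono_on {0..} \<rho> \<and> filterlim \<rho> at_top at_top"

text \<open>Time-T value of the solution of z' = g z, z 0 = x (unique under local Lipschitz).\<close>
definition ode_flow :: "('a::euclidean_space \<Rightarrow> 'a) \<Rightarrow> 'a \<Rightarrow> real \<Rightarrow> 'a" where
  "ode_flow g x T = (THE v. \<exists>z. z 0 = x \<and>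
     (\<forall>t\<in>{0..T}. (z has_vector_derivative g (z t)) (at t within {0..T})) \<and> z T = v)"

definition F_e :: "('a::euclidean_space \<Rightarrow> 'b \<Rightarrow> 'a) \<Rightarrow> 'a \<Rightarrow> 'b \<Rightarrow> real \<Rightarrow> 'a" where
  "F_e f x u T = ode_flow (\<lambda>z. f z u) x T"

definition assumption1 :: "('a::euclidean_space \<Rightarrow> 'b::euclidean_space \<Rightarrow> 'a) \<Rightarrow> bool" where
  "assumption1 f \<longleftrightarrow> f 0 0 = 0 \<and>
    (\<forall>M\<ge>0. \<forall>Mu\<ge>0. \<exists>L>0. \<forall>x y u v. norm x \<le> M \<longrightarrow> norm y \<le> M \<longrightarrow> norm u \<le> Mu \<longrightarrow> norm v \<le> Mu \<longrightarrow>
       norm (f x u - f y v) \<le> L * (norm (x - y) + norm (u - v)))"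

definition assumption2 :: "('a::euclidean_space \<Rightarrow> 'b::euclidean_space) \<Rightarrow> bool" where
  "assumption2 uc \<longleftrightarrow> uc 0 = 0 \<and>
    (\<forall>M\<ge>0. \<exists>L>0. \<forall>x y. norm x \<le> M \<longrightarrow> norm y \<le> M \<longrightarrow> norm (uc x - uc y) \<le> L * norm (x - y))"

definition StL :: "('a::euclidean_space \<Rightarrow> real \<Rightarrow> 'b::euclidean_space) \<Rightarrow> bool" where
  "StL U \<longleftrightarrow> (\<exists>K Tstar :: real \<Rightarrow> real. antimono_on {0..} Tstar \<and>
     (\<forall>M\<ge>0. K M > 0 \<and> Tstar M > 0 \<and>
        (\<forall>T. 0 \<le> T \<and> T < Tstar M \<longrightarrow> U 0 T = 0 \<and>
           (\<forall>x y. norm x \<le> M \<longrightarrow> norm y \<le> M \<longrightarrow> norm (U x T - U y T) \<le> K M * norm (x - y)))))"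

definition StC :: "('a::euclidean_space \<Rightarrow> real \<Rightarrow> 'b::euclidean_space) \<Rightarrow> ('a \<Rightarrow> real \<Rightarrow> 'b) \<Rightarrow> bool" where
  "StC U V \<longleftrightarrow> (\<forall>M\<ge>0. \<exists>\<rho> Tstar. class_K_inf \<rho> \<and> Tstar > 0 \<and>
     (\<forall>x T. norm x \<le> M \<longrightarrow> 0 \<le> T \<longrightarrow> T < Tstar \<longrightarrow> norm (U x T - V x T) \<le> \<rho> T * norm x))"

definition EPC :: "('a::real_normed_vector \<Rightarrow> real \<Rightarrow> 'a) \<Rightarrow> ('a \<Rightarrow> real \<Rightarrow> 'a) \<Rightarrow> bool" where
  "EPC Fa Fb \<longleftrightarrow> (\<forall>M\<ge>0. \<exists>K Tstar \<rho>. K > 0 \<and> Tstar > 0 \<and> class_K_inf \<rho> \<and>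
     (\<forall>x y T. norm x \<le> M \<longrightarrow> norm y \<le> M \<longrightarrow> 0 < T \<longrightarrow> T < Tstar \<longrightarrow>
        norm (Fa x T - Fb y T) \<le> (1 + K * T) * norm (x - y) + T * \<rho> T * max (norm x) (norm y)))"

end

(* Two curves on [0, T] whose derivatives differ by at most A |z - w| + B, with A T <= 1/2, have
   maximal deviation m <= |z 0 - w 0| + T (A m + B), hence m <= (1 + 2 A T)(|z 0 - w 0| + T B).
   Compare the closed-loop solution from x with the open-loop solution from y under the frozen
   input u = U(y, T).  Their vector fields differ by at most L (1 + L_c) |z - w| plus
   L (L_c |w - y| + |u_c y - u|); the open-loop solution moves only O(T |y|) away from y, and StC
   gives |u_c y - u| <= rho(T) |y|, so B = O((T + rho(T)) |y|), which is the EPC estimate.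
   For small T both flows exist, are unique and stay in a ball on which the Lipschitz data hold;
   existence comes from Picard iteration for the field truncated to that ball. *)

theory Submission
  imports Defs
begin

definition ode_solution_on :: "('a::real_normed_vector \<Rightarrow> 'a) \<Rightarrow> real \<Rightarrow> (real \<Rightarrow> 'a) \<Rightarrow> bool" where
  "ode_solution_on g T z \<longleftrightarrow> (\<forall>t\<in>{0..T}. (z has_vector_derivative g (z t)) (at t within {0..T}))"

lemma norm_diff_le_of_vector_derivative_bound:
  fixes d :: "real \<Rightarrow> 'a::real_normed_vector"
  assumes "a \<le> b"
    and deriv: "\<And>s. s \<in> {a..b} \<Longrightarrow> (d has_vector_derivative d' s) (at s within {a..b})"
    and bound: "\<And>s. s \<in> {a<..<b} \<Longrightarrow> norm (d' s) \<le> C"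
  shows "norm (d b - d a) \<le> C * (b - a)"
proof (cases "a = b")
  case False
  then have "a < b" using \<open>a \<le> b\<close> by simp
  have "norm (d b - d a) \<le> C * b - C * a"
  proof (rule differentiable_bound_general[OF \<open>a < b\<close>, where \<phi>' = "\<lambda>_. C" and f' = d'])
    show "continuous_on {a..b} d" using deriv by (rule continuous_on_vector_derivative)
    fix s assume "a < s" "s < b"
    then show "(d has_vector_derivative d' s) (at s)"
      using deriv[of s] by (simp add: at_within_Icc_at)
    show "norm (d' s) \<le> C" using bound \<open>a < s\<close> \<open>s < b\<close> by simp
  qed (auto intro!: continuous_intros derivative_eq_intros)
  then show ?thesis by (simp add: algebra_simps)
qed simp

lemma short_time_gronwall:
  fixes z w :: "real \<Rightarrow> 'a::real_normed_vector"
  assumes A: "0 \<le> A" "A * T \<le> 1/2" and B: "0 \<le> B"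
    and dz: "\<And>s. s \<in> {0..T} \<Longrightarrow> (z has_vector_derivative z' s) (at s within {0..T})"
    and dw: "\<And>s. s \<in> {0..T} \<Longrightarrow> (w has_vector_derivative w' s) (at s within {0..T})"
    and est: "\<And>s. s \<in> {0..T} \<Longrightarrow> norm (z' s - w' s) \<le> A * norm (z s - w s) + B"
    and t: "t \<in> {0..T}"
  shows "norm (z t - w t) \<le> (1 + 2 * A * T) * (norm (z 0 - w 0) + T * B)"
proof -
  have T: "0 \<le> T" using t by simp
  define e where "e s = norm (z s - w s)" for s
  have d: "((\<lambda>s. z s - w s) has_vector_derivative z' s - w' s) (at s within {0..T})"
    if "s \<in> {0..T}" for s
    using that by (intro derivative_intros dz dw)
  have "continuous_on {0..T} e"
    unfolding e_def by (intro continuous_intros continuous_on_vector_derivative[OF d])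
  then obtain t1 where t1: "t1 \<in> {0..T}" and max: "\<And>s. s \<in> {0..T} \<Longrightarrow> e s \<le> e t1"
    using continuous_attains_sup[OF compact_Icc, of 0 T e] T by auto
  define m where "m = e t1"
  have "norm ((z t1 - w t1) - (z 0 - w 0)) \<le> (A * m + B) * (t1 - 0)"
  proof (rule norm_diff_le_of_vector_derivative_bound)
    show "0 \<le> t1" using t1 by simp
    fix s assume "s \<in> {0..t1}"
    then show "((\<lambda>s. z s - w s) has_vector_derivative z' s - w' s) (at s within {0..t1})"
      using t1 by (intro has_vector_derivative_within_subset[OF d]) auto
  next
    fix s assume s: "s \<in> {0<..<t1}"
    then have "s \<in> {0..T}" using t1 by simp
    then have "A * e s \<le> A * m" using max A(1) unfolding m_def by (simp add: mult_left_mono)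
    then show "norm (z' s - w' s) \<le> A * m + B"
      using est[OF \<open>s \<in> {0..T}\<close>] unfolding e_def by simp
  qed
  then have "m \<le> e 0 + t1 * (A * m + B)"
    unfolding m_def e_def using norm_triangle_ineq2[of "z t1 - w t1" "z 0 - w 0"]
    by (simp add: mult.commute)
  also have "\<dots> \<le> e 0 + T * (A * m + B)"
    using t1 A B by (intro add_left_mono mult_right_mono) (auto simp: m_def e_def)
  finally have bound: "m * (1 - A * T) \<le> e 0 + T * B" by (simp add: algebra_simps)
  have "1 \<le> (1 + 2 * A * T) * (1 - A * T)"
    using mult_nonneg_nonneg[of "A * T" "1 - 2 * (A * T)"] A T by (simp add: algebra_simps)
  moreover have "0 \<le> m" unfolding m_def e_def by simp
  ultimately have "m \<le> (1 + 2 * A * T) * (1 - A * T) * m"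
    by (simp add: mult_le_cancel_right1)
  also have "\<dots> = (1 + 2 * A * T) * (m * (1 - A * T))" by simp
  also have "\<dots> \<le> (1 + 2 * A * T) * (e 0 + T * B)"
    using bound A T by (intro mult_left_mono) auto
  finally have "m \<le> (1 + 2 * A * T) * (e 0 + T * B)" .
  then show ?thesis using max[OF t] unfolding m_def e_def by simp
qed

lemma ode_solution_stays_in_ball:
  assumes sol: "ode_solution_on g T w"
    and bound: "\<And>v. norm v \<le> R \<Longrightarrow> norm (g v) \<le> G" and G: "0 \<le> G"
    and small: "norm (w 0) + G * T < R" and t: "t \<in> {0..T}"
  shows "norm (w t) < R"
proof (rule ccontr)
  assume "\<not> norm (w t) < R"
  have deriv: "\<And>s. s \<in> {0..T} \<Longrightarrow> (w has_vector_derivative g (w s)) (at s within {0..T})"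
    using sol unfolding ode_solution_on_def by blast
  define X where "X = {s \<in> {0..T}. R \<le> norm (w s)}"
  have "continuous_on {0..T} (\<lambda>s. norm (w s))"
    by (intro continuous_intros continuous_on_vector_derivative[OF deriv])
  then have "closed X" unfolding X_def
    using continuous_closed_preimage[of "{0..T}" _ "{R..}"] by (simp add: vimage_def Int_def)
  moreover have "t \<in> X" and below: "bdd_below X" using t \<open>\<not> norm (w t) < R\<close>
    unfolding X_def by (auto intro: bdd_belowI[of _ 0])
  ultimately have "Inf X \<in> X" using closed_contains_Inf by blast
  \<comment> \<open>the first exit time from the open ball\<close>
  define t0 where "t0 = Inf X"
  have t0: "t0 \<in> {0..T}" "R \<le> norm (w t0)" using \<open>Inf X \<in> X\<close> unfolding t0_def X_def by auto
  have "norm (w t0 - w 0) \<le> G * (t0 - 0)"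
  proof (rule norm_diff_le_of_vector_derivative_bound)
    show "0 \<le> t0" using t0 by simp
    fix s assume "s \<in> {0..t0}"
    then show "(w has_vector_derivative g (w s)) (at s within {0..t0})"
      using t0 by (intro has_vector_derivative_within_subset[OF deriv]) auto
  next
    fix s assume s: "s \<in> {0<..<t0}"
    have "norm (w s) < R"
    proof (rule ccontr)
      assume "\<not> norm (w s) < R"
      then have "s \<in> X" using s t0 unfolding X_def by auto
      then have "t0 \<le> s" unfolding t0_def using below by (rule cInf_lower)
      then show False using s by simp
    qed
    then show "norm (g (w s)) \<le> G" by (intro bound) simp
  qed
  then have "norm (w t0) \<le> norm (w 0) + G * T"
    using norm_triangle_ineq2[of "w t0" "w 0"] mult_left_mono[of t0 T G] G t0 by simp
  then show False using small t0 by simp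
qed

lemma picard_existence:
  fixes g :: "'a::banach \<Rightarrow> 'a"
  assumes lip: "L-lipschitz_on UNIV g" and T: "0 \<le> T" and LT: "L * T < 1"
  shows "\<exists>z. z 0 = x \<and> ode_solution_on g T z"
proof -
  have L: "0 \<le> L" using lip by (rule lipschitz_on_nonneg)
  have gc: "continuous_on UNIV g" using lip by (rule lipschitz_on_continuous_on)
  \<comment> \<open>times are clamped to \<open>[0, T]\<close> so that the Picard operator acts on bounded continuous functions on \<open>\<real>\<close>\<close>
  define c where "c t = max 0 (min T t)" for t :: real
  have cT: "c t \<in> {0..T}" for t unfolding c_def using T by auto
  define I where "I \<phi> t = integral {0..t} (\<lambda>s. g (apply_bcontfun \<phi> s))"
    for \<phi> :: "real \<Rightarrow>\<^sub>C 'a" and t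
  have gc\<phi>: "continuous_on S (\<lambda>s. g (apply_bcontfun \<phi> s))" for \<phi> S
    by (rule continuous_on_compose2[OF gc continuous_on_apply_bcontfun]) auto
  have I_deriv: "(I \<phi> has_vector_derivative g (apply_bcontfun \<phi> t)) (at t within {0..T})"
    if "t \<in> {0..T}" for \<phi> t
    unfolding I_def by (rule integral_has_vector_derivative[OF gc\<phi> that])
  have I_bound: "norm (I \<phi> (c t)) \<le> (norm (g 0) + L * norm \<phi>) * T" for \<phi> t
  proof -
    have "norm (g (apply_bcontfun \<phi> s)) \<le> norm (g 0) + L * norm \<phi>" for s
    proof -
      have "norm (g (apply_bcontfun \<phi> s) - g 0) \<le> L * norm (apply_bcontfun \<phi> s)"
        using lipschitz_onD[OF lip, of "apply_bcontfun \<phi> s" 0] by (simp add: dist_norm)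
      also have "\<dots> \<le> L * norm \<phi>" using norm_bounded L by (rule mult_left_mono)
      finally show ?thesis using norm_triangle_ineq2[of "g (apply_bcontfun \<phi> s)" "g 0"] by simp
    qed
    then have "norm (I \<phi> (c t)) \<le> (norm (g 0) + L * norm \<phi>) * (c t - 0)"
      unfolding I_def using cT[of t] by (intro integral_bound gc\<phi>) auto
    also have "\<dots> \<le> (norm (g 0) + L * norm \<phi>) * T"
      using cT[of t] L by (intro mult_left_mono) auto
    finally show ?thesis .
  qed
  define F where "F \<phi> t = x + I \<phi> (c t)" for \<phi> t
  have F_bcontfun: "F \<phi> \<in> bcontfun" for \<phi>
  proof (rule bcontfun_normI)
    have "continuous_on {0..T} (I \<phi>)" using I_deriv by (rule continuous_on_vector_derivative)
    then have "continuous_on UNIV (\<lambda>t. I \<phi> (c t))"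
      by (rule continuous_on_compose2) (use T in \<open>auto simp: c_def cT intro!: continuous_intros\<close>)
    then show "continuous_on UNIV (F \<phi>)" unfolding F_def by (intro continuous_intros)
    show "norm (F \<phi> t) \<le> norm x + (norm (g 0) + L * norm \<phi>) * T" for t
      unfolding F_def using norm_triangle_ineq[of x] I_bound[of \<phi> t] by (meson add_left_mono order_trans)
  qed
  define P where "P \<phi> = Bcontfun (F \<phi>)" for \<phi>
  have P: "apply_bcontfun (P \<phi>) = F \<phi>" for \<phi>
    unfolding P_def using F_bcontfun by (rule Bcontfun_inverse)
  have "dist (P \<phi>) (P \<psi>) \<le> (L * T) * dist \<phi> \<psi>" for \<phi> \<psi>
  proof (rule dist_bound)
    fix t
    let ?h = "\<lambda>s. g (apply_bcontfun \<phi> s) - g (apply_bcontfun \<psi> s)"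
    have "dist (P \<phi> t) (P \<psi> t) = norm (integral {0..c t} ?h)"
      unfolding P F_def I_def dist_norm
      by (subst integral_diff) (auto intro!: integrable_continuous_real gc\<phi>)
    also have "\<dots> \<le> (L * dist \<phi> \<psi>) * (c t - 0)"
    proof (rule integral_bound)
      show "continuous_on {0..c t} ?h" by (intro continuous_intros gc\<phi>)
      fix s
      have "norm (?h s) \<le> L * dist (apply_bcontfun \<phi> s) (apply_bcontfun \<psi> s)"
        using lipschitz_onD[OF lip] by (simp add: dist_norm)
      also have "\<dots> \<le> L * dist \<phi> \<psi>" using dist_bounded L by (rule mult_left_mono)
      finally show "norm (?h s) \<le> L * dist \<phi> \<psi>" .
    qed (use cT in auto)
    also have "\<dots> \<le> (L * dist \<phi> \<psi>) * T" using cT[of t] L by (intro mult_left_mono) auto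
    also have "\<dots> = (L * T) * dist \<phi> \<psi>" by simp
    finally show "dist (P \<phi> t) (P \<psi> t) \<le> (L * T) * dist \<phi> \<psi>" .
  qed
  then obtain \<phi> where "P \<phi> = \<phi>"
    using banach_fix_type[of "L * T" P] L T LT by auto
  then have z: "apply_bcontfun \<phi> t = x + I \<phi> t" if "t \<in> {0..T}" for t
    using P[of \<phi>] that unfolding F_def c_def by (metis atLeastAtMost_iff max.absorb2 min.absorb2)
  show ?thesis
  proof (intro exI conjI)
    show "apply_bcontfun \<phi> 0 = x" using z[of 0] T by (simp add: I_def)
    show "ode_solution_on g T (apply_bcontfun \<phi>)" unfolding ode_solution_on_def
    proof
      fix t assume "t \<in> {0..T}"
      have "((\<lambda>t. x + I \<phi> t) has_vector_derivative g (apply_bcontfun \<phi> t)) (at t within {0..T})"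
        using I_deriv[OF \<open>t \<in> {0..T}\<close>] by (intro derivative_eq_intros) auto
      then show "(apply_bcontfun \<phi> has_vector_derivative g (apply_bcontfun \<phi> t)) (at t within {0..T})"
        using has_vector_derivative_transform[of t "{0..T}" "apply_bcontfun \<phi>" "\<lambda>t. x + I \<phi> t"]
          z \<open>t \<in> {0..T}\<close> by blast
    qed
  qed
qed

lemma ode_solution_exists_in_ball:
  fixes g :: "'a::euclidean_space \<Rightarrow> 'a"
  assumes lip: "L-lipschitz_on (cball 0 R) g" and LT: "L * T < 1" and T: "0 \<le> T"
    and bound: "\<And>v. norm v \<le> R \<Longrightarrow> norm (g v) \<le> G" and G: "0 \<le> G"
    and small: "norm x + G * T < R"
  shows "\<exists>z. z 0 = x \<and> ode_solution_on g T z"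
proof -
  have "0 \<le> R" using small mult_nonneg_nonneg[OF G T] norm_ge_zero[of x] by linarith
  then have R: "cball (0::'a) R \<noteq> {}" by simp
  define p where "p = closest_point (cball (0::'a) R)"
  have p_ball: "norm (p v) \<le> R" for v
    using closest_point_in_set[OF closed_cball R] unfolding p_def by simp
  \<comment> \<open>\<open>g \<circ> p\<close> is a globally Lipschitz extension of \<open>g\<close> from the ball\<close>
  have "1-lipschitz_on UNIV p"
    using closest_point_lipschitz[OF convex_cball closed_cball R] unfolding p_def
    by (intro lipschitz_onI) auto
  moreover have "L-lipschitz_on (p ` UNIV) g"
    using p_ball by (intro lipschitz_on_mono[OF lip]) auto
  ultimately have "(L * 1)-lipschitz_on UNIV (\<lambda>v. g (p v))" by (rule lipschitz_on_compose2)
  then obtain z where z: "z 0 = x" "ode_solution_on (\<lambda>v. g (p v)) T z"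
    using picard_existence[of L "\<lambda>v. g (p v)" T x] LT T by auto
  have "p (z t) = z t" if "t \<in> {0..T}" for t
  proof -
    have "norm (z t) < R"
      using ode_solution_stays_in_ball[OF z(2) _ G _ that] bound p_ball small z(1) by blast
    then show ?thesis unfolding p_def by (intro closest_point_self) simp
  qed
  then have "ode_solution_on g T z" using z(2) unfolding ode_solution_on_def by simp
  then show ?thesis using z(1) by blast
qed

lemma ode_solution_unique_in_ball:
  assumes lip: "L-lipschitz_on (cball 0 R) g" and LT: "L * T \<le> 1/2"
    and z: "ode_solution_on g T z" "\<forall>t\<in>{0..T}. norm (z t) \<le> R"
    and w: "ode_solution_on g T w" "\<forall>t\<in>{0..T}. norm (w t) \<le> R"
    and "z 0 = w 0" and t: "t \<in> {0..T}"
  shows "z t = w t"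
proof -
  have "norm (z t - w t) \<le> (1 + 2 * L * T) * (norm (z 0 - w 0) + T * 0)"
  proof (rule short_time_gronwall[OF lipschitz_on_nonneg[OF lip] LT order_refl _ _ _ t])
    fix s assume "s \<in> {0..T}"
    then show "norm (g (z s) - g (w s)) \<le> L * norm (z s - w s) + 0"
      using lipschitz_onD[OF lip, of "z s" "w s"] z(2) w(2) by (simp add: dist_norm)
  qed (use z(1) w(1) in \<open>auto simp: ode_solution_on_def\<close>)
  then show ?thesis using \<open>z 0 = w 0\<close> by simp
qed

lemma ode_flow_eqI:
  assumes "z 0 = x" "ode_solution_on g T z"
    and "\<And>w. w 0 = x \<Longrightarrow> ode_solution_on g T w \<Longrightarrow> w T = z T"
  shows "ode_flow g x T = z T"
  unfolding ode_flow_def using assms unfolding ode_solution_on_def by (intro the_equality) blast+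

lemma ode_flow_in_ball:
  fixes g :: "'a::euclidean_space \<Rightarrow> 'a"
  assumes lip: "L-lipschitz_on (cball 0 R) g" and LT: "L * T \<le> 1/2" and T: "0 \<le> T"
    and bound: "\<And>v. norm v \<le> R \<Longrightarrow> norm (g v) \<le> G" and G: "0 \<le> G"
    and small: "norm x + G * T < R"
  obtains z where "z 0 = x" "ode_solution_on g T z" "\<forall>t\<in>{0..T}. norm (z t) < R"
    "ode_flow g x T = z T"
proof -
  have stays: "\<forall>t\<in>{0..T}. norm (w t) < R" if "w 0 = x" "ode_solution_on g T w" for w
    using ode_solution_stays_in_ball[OF that(2) bound G] small that(1) by blast
  obtain z where z: "z 0 = x" "ode_solution_on g T z"
    using ode_solution_exists_in_ball[OF lip _ T bound G small] LT by force
  have "ode_flow g x T = z T"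
  proof (rule ode_flow_eqI[OF z])
    fix w assume "w 0 = x" "ode_solution_on g T w"
    then show "w T = z T"
      using ode_solution_unique_in_ball[OF lip LT] z stays T by (simp add: less_imp_le)
  qed
  then show ?thesis using that z stays[OF z] by blast
qed

lemma class_K_inf_nonneg:
  assumes "class_K_inf \<rho>" "0 \<le> T"
  shows "0 \<le> \<rho> T"
  using assms strict_mono_onD[of "{0..}" \<rho> 0 T] unfolding class_K_inf_def
  by (cases "T = 0") auto

lemma class_K_inf_add_linear:
  assumes K: "class_K_inf \<rho>" and a: "0 < a" and b: "0 \<le> b"
  shows "class_K_inf (\<lambda>T. a * T + b * \<rho> T)"
proof -
  have "strict_mono_on {0..} (\<lambda>T. a * T + b * \<rho> T)"
  proof (rule strict_mono_onI)
    fix r s :: real assume "r \<in> {0..}" "s \<in> {0..}" "r < s"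
    then have "b * \<rho> r \<le> b * \<rho> s"
      using K b strict_mono_onD[of "{0..}" \<rho> r s] unfolding class_K_inf_def
      by (intro mult_left_mono) auto
    then show "a * r + b * \<rho> r < a * s + b * \<rho> s"
      using mult_strict_left_mono[OF \<open>r < s\<close> a] by simp
  qed
  moreover have "filterlim (\<lambda>T. a * T + b * \<rho> T) at_top at_top"
  proof (rule filterlim_at_top_mono)
    show "filterlim (\<lambda>T::real. a * T) at_top at_top"
      using a by (intro filterlim_tendsto_pos_mult_at_top[OF tendsto_const a filterlim_ident])
    show "\<forall>\<^sub>F T in at_top. a * T \<le> a * T + b * \<rho> T"
      using eventually_ge_at_top[of "0::real"]
      by eventually_elim (use class_K_inf_nonneg[OF K] b in simp)
  qed
  ultimately show ?thesis using K unfolding class_K_inf_def by (auto intro!: continuous_intros)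
qed

locale lipschitz_feedback_system =
  fixes f :: "'a::euclidean_space \<Rightarrow> 'b::euclidean_space \<Rightarrow> 'a" and uc :: "'a \<Rightarrow> 'b"
    and R Mu Lf Lc :: real
  assumes f_zero: "f 0 0 = 0" and uc_zero: "uc 0 = 0"
    and f_lipschitz: "\<And>x y u v. norm x \<le> R \<Longrightarrow> norm y \<le> R \<Longrightarrow> norm u \<le> Mu \<Longrightarrow> norm v \<le> Mu \<Longrightarrow>
       norm (f x u - f y v) \<le> Lf * (norm (x - y) + norm (u - v))"
    and uc_lipschitz: "\<And>x y. norm x \<le> R \<Longrightarrow> norm y \<le> R \<Longrightarrow>
       norm (uc x - uc y) \<le> Lc * norm (x - y)"
    and Lf_pos: "0 < Lf" and Lc_pos: "0 < Lc" and uc_range: "Lc * R \<le> Mu" and R_nonneg: "0 \<le> R"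
begin

lemma Lc_nonneg: "0 \<le> Lc"
  using Lc_pos by simp

lemma Mu_nonneg: "0 \<le> Mu"
  using uc_range mult_nonneg_nonneg[OF Lc_nonneg R_nonneg] by linarith

lemma uc_bound:
  assumes "norm v \<le> R"
  shows "norm (uc v) \<le> Mu"
proof -
  have "norm (uc v) \<le> Lc * norm v"
    using uc_lipschitz[OF assms, of 0] uc_zero order_trans[OF norm_ge_zero assms] by simp
  also have "\<dots> \<le> Lc * R" using assms Lc_nonneg by (rule mult_left_mono)
  finally show ?thesis using uc_range by simp
qed

lemma closed_loop_lipschitz: "(Lf * (1 + Lc))-lipschitz_on (cball 0 R) (\<lambda>v. f v (uc v))"
proof (rule lipschitz_onI)
  fix a b :: 'a assume "a \<in> cball 0 R" "b \<in> cball 0 R"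
  then have ab: "norm a \<le> R" "norm b \<le> R" by auto
  have "norm (f a (uc a) - f b (uc b)) \<le> Lf * (norm (a - b) + norm (uc a - uc b))"
    using ab by (intro f_lipschitz uc_bound)
  also have "\<dots> \<le> Lf * (norm (a - b) + Lc * norm (a - b))"
    using uc_lipschitz[OF ab] Lf_pos by (intro mult_left_mono add_left_mono) auto
  finally show "dist (f a (uc a)) (f b (uc b)) \<le> Lf * (1 + Lc) * dist a b"
    by (simp add: dist_norm algebra_simps)
qed (use Lf_pos Lc_nonneg in simp)

lemma closed_loop_bound:
  assumes "norm v \<le> R"
  shows "norm (f v (uc v)) \<le> Lf * (1 + Lc) * R"
proof -
  have "norm (f v (uc v)) \<le> Lf * (1 + Lc) * norm v"
    using lipschitz_onD[OF closed_loop_lipschitz, of v 0] assms f_zero uc_zero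
      order_trans[OF norm_ge_zero assms] by (simp add: dist_norm)
  also have "\<dots> \<le> Lf * (1 + Lc) * R" using assms Lf_pos Lc_nonneg by (intro mult_left_mono) auto
  finally show ?thesis .
qed

lemma open_loop_lipschitz:
  assumes "norm u \<le> Mu"
  shows "Lf-lipschitz_on (cball 0 R) (\<lambda>v. f v u)"
  using f_lipschitz[OF _ _ assms assms] Lf_pos by (intro lipschitz_onI) (auto simp: dist_norm)

lemma open_loop_growth:
  assumes "norm v \<le> R" "norm u \<le> Mu"
  shows "norm (f v u) \<le> Lf * (norm v + norm u)"
  using f_lipschitz[OF assms(1) _ assms(2), of 0 0] f_zero
    order_trans[OF norm_ge_zero assms(1)] order_trans[OF norm_ge_zero assms(2)] by simp

lemma open_loop_solution_near_initial:
  assumes w: "ode_solution_on (\<lambda>v. f v u) T w" "\<forall>t\<in>{0..T}. norm (w t) \<le> R"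
    and u: "norm u \<le> Mu" and LT: "Lf * T \<le> 1/2" and t: "t \<in> {0..T}"
  shows "norm (w t - w 0) \<le> 2 * T * Lf * (norm (w 0) + norm u)"
proof -
  define B where "B = Lf * (norm (w 0) + norm u)"
  have "norm (w t - w 0) \<le> (1 + 2 * Lf * T) * (norm (w 0 - w 0) + T * B)"
  proof (rule short_time_gronwall[where z = w and w = "\<lambda>_. w 0" and w' = "\<lambda>_. 0", OF _ LT _ _ _ _ t])
    fix s assume s: "s \<in> {0..T}"
    have "norm (f (w s) u) \<le> Lf * (norm (w s) + norm u)" using w(2) s u by (intro open_loop_growth) auto
    also have "\<dots> \<le> Lf * (norm (w s - w 0) + norm (w 0) + norm u)"
      using norm_triangle_sub[of "w s" "w 0"] Lf_pos by (intro mult_left_mono) auto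
    finally show "norm (f (w s) u - 0) \<le> Lf * norm (w s - w 0) + B"
      unfolding B_def by (simp add: algebra_simps)
  qed (use w(1) Lf_pos u in \<open>auto simp: ode_solution_on_def B_def\<close>)
  also have "\<dots> = (1 + 2 * Lf * T) * (T * B)" by simp
  also have "\<dots> \<le> 2 * (T * B)"
    using LT t Lf_pos by (intro mult_right_mono) (auto simp: B_def)
  finally show ?thesis by (simp add: B_def)
qed

lemma closed_open_solution_estimate:
  assumes z: "ode_solution_on (\<lambda>v. f v (uc v)) T z" "\<forall>t\<in>{0..T}. norm (z t) \<le> R"
    and w: "ode_solution_on (\<lambda>v. f v u) T w" "\<forall>t\<in>{0..T}. norm (w t) \<le> R"
    and u: "norm u \<le> Mu" and T: "0 \<le> T" and AT: "Lf * (1 + Lc) * T \<le> 1/2"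
  shows "norm (z T - w T) \<le> (1 + 2 * (Lf * (1 + Lc)) * T) * norm (z 0 - w 0)
           + 2 * T * Lf * (2 * Lc * T * Lf * (norm (w 0) + norm u) + norm (uc (w 0) - u))"
proof -
  define A where "A = Lf * (1 + Lc)"
  define D where "D = 2 * T * Lf * (norm (w 0) + norm u)"
  define B where "B = Lf * (Lc * D + norm (uc (w 0) - u))"
  have A: "0 \<le> A" "A * T \<le> 1/2" using Lf_pos Lc_nonneg AT unfolding A_def by auto
  have B: "0 \<le> B" unfolding B_def D_def using Lf_pos Lc_nonneg T by simp
  have "Lf * T \<le> A * T" unfolding A_def using Lf_pos Lc_nonneg T by (intro mult_right_mono) auto
  then have near: "norm (w s - w 0) \<le> D" if "s \<in> {0..T}" for s
    unfolding D_def using open_loop_solution_near_initial[OF w u _ that] A by simp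
  have "norm (z T - w T) \<le> (1 + 2 * A * T) * (norm (z 0 - w 0) + T * B)"
  proof (rule short_time_gronwall[OF A B])
    fix s assume s: "s \<in> {0..T}"
    have zs: "norm (z s) \<le> R" and ws: "norm (w s) \<le> R" and w0: "norm (w 0) \<le> R"
      using z(2) w(2) s T by auto
    have "norm (uc (z s) - u) \<le> norm (uc (z s) - uc (w 0)) + norm (uc (w 0) - u)"
      by (rule norm_diff_triangle_le) auto
    also have "\<dots> \<le> Lc * (norm (z s - w s) + D) + norm (uc (w 0) - u)"
    proof -
      have "norm (z s - w 0) \<le> norm (z s - w s) + D"
        using norm_diff_triangle_le[OF order_refl near[OF s]] .
      then have "Lc * norm (z s - w 0) \<le> Lc * (norm (z s - w s) + D)"
        using Lc_nonneg by (rule mult_left_mono)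
      then show ?thesis using uc_lipschitz[OF zs w0] by simp
    qed
    finally have "Lf * (norm (z s - w s) + norm (uc (z s) - u))
        \<le> Lf * (norm (z s - w s) + (Lc * (norm (z s - w s) + D) + norm (uc (w 0) - u)))"
      using Lf_pos by (intro mult_left_mono add_left_mono) auto
    also have "\<dots> = A * norm (z s - w s) + B" unfolding A_def B_def by algebra
    finally show "norm (f (z s) (uc (z s)) - f (w s) u) \<le> A * norm (z s - w s) + B"
      using f_lipschitz[OF zs ws uc_bound[OF zs] u] by linarith
  qed (use z(1) w(1) T in \<open>auto simp: ode_solution_on_def\<close>)
  also have "\<dots> \<le> (1 + 2 * A * T) * norm (z 0 - w 0) + 2 * (T * B)"
    using A T B unfolding distrib_left by (intro add_left_mono mult_right_mono) auto
  also have "2 * (T * B) = 2 * T * Lf * (2 * Lc * T * Lf * (norm (w 0) + norm u) + norm (uc (w 0) - u))"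
    unfolding B_def D_def by algebra
  finally show ?thesis unfolding A_def .
qed

\<comment> \<open>dominates the closed-loop Lipschitz constant and the bounds of both vector fields on the ball\<close>
definition time_rate :: real where
  "time_rate = Lf * (1 + Lc) + Lf * (1 + Lc) * R + Lf * (R + Mu)"

lemma closed_open_flow_estimate:
  assumes x: "norm x + 1 \<le> R" and y: "norm y + 1 \<le> R"
    and T: "0 \<le> T" and rate: "time_rate * T \<le> 1/2"
    and u: "norm u \<le> Mu" "norm u \<le> Km * norm y" and r: "norm (uc y - u) \<le> r * norm y"
  shows "norm (ode_flow (\<lambda>v. f v (uc v)) x T - ode_flow (\<lambda>v. f v u) y T)
           \<le> (1 + 2 * (Lf * (1 + Lc)) * T) * norm (x - y)
             + T * (4 * Lf\<^sup>2 * Lc * (1 + Km) * T + 2 * Lf * r) * norm y"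
proof -
  have "0 \<le> Lf * (1 + Lc) * R * T" "0 \<le> Lf * (R + Mu) * T" "0 \<le> Lf * (1 + Lc) * T"
    using Lf_pos Lc_nonneg T R_nonneg Mu_nonneg by simp_all
  then have rates: "Lf * (1 + Lc) * T \<le> 1/2" "Lf * (1 + Lc) * R * T \<le> 1/2" "Lf * (R + Mu) * T \<le> 1/2"
    using rate unfolding time_rate_def by (simp_all add: distrib_right)
  have "Lf * T \<le> Lf * (1 + Lc) * T" using Lf_pos Lc_nonneg T by (simp add: mult_right_mono)
  then have LfT: "Lf * T \<le> 1/2" using rates(1) by linarith
  obtain z where z: "z 0 = x" "ode_solution_on (\<lambda>v. f v (uc v)) T z" "\<forall>t\<in>{0..T}. norm (z t) < R"
      "ode_flow (\<lambda>v. f v (uc v)) x T = z T"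
  proof (rule ode_flow_in_ball[OF closed_loop_lipschitz rates(1) T closed_loop_bound])
    show "0 \<le> Lf * (1 + Lc) * R" using Lf_pos Lc_nonneg R_nonneg by simp
    show "norm x + Lf * (1 + Lc) * R * T < R" using x rates(2) by simp
  qed
  have open_loop_bound: "norm (f v u) \<le> Lf * (R + Mu)" if "norm v \<le> R" for v
    using open_loop_growth[OF that u(1)] that u(1) Lf_pos
    by (meson add_mono mult_left_mono less_imp_le order_trans)
  obtain w where w: "w 0 = y" "ode_solution_on (\<lambda>v. f v u) T w" "\<forall>t\<in>{0..T}. norm (w t) < R"
      "ode_flow (\<lambda>v. f v u) y T = w T"
  proof (rule ode_flow_in_ball[OF open_loop_lipschitz[OF u(1)] LfT T open_loop_bound])
    show "0 \<le> Lf * (R + Mu)" using Lf_pos R_nonneg Mu_nonneg by simp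
    show "norm y + Lf * (R + Mu) * T < R" using y rates(3) by simp
  qed
  have "norm (z T - w T) \<le> (1 + 2 * (Lf * (1 + Lc)) * T) * norm (x - y)
      + 2 * T * Lf * (2 * Lc * T * Lf * (norm y + norm u) + norm (uc y - u))"
    using closed_open_solution_estimate[OF z(2) _ w(2) _ u(1) T rates(1)] z(1,3) w(1,3)
    by (simp add: less_imp_le)
  also have "\<dots> \<le> (1 + 2 * (Lf * (1 + Lc)) * T) * norm (x - y)
      + 2 * T * Lf * (2 * Lc * T * Lf * (norm y + Km * norm y) + r * norm y)"
    using u(2) r Lc_nonneg T Lf_pos by (intro add_left_mono mult_left_mono add_mono) auto
  also have "\<dots> = (1 + 2 * (Lf * (1 + Lc)) * T) * norm (x - y)
        + T * (4 * Lf\<^sup>2 * Lc * (1 + Km) * T + 2 * Lf * r) * norm y"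
    by (simp add: power2_eq_square algebra_simps)
  finally show ?thesis using z(4) w(4) by simp
qed

lemma closed_open_flow_EPC_bound:
  assumes Km: "0 \<le> Km" and \<rho>: "class_K_inf \<rho>" and Tu: "0 < Tu"
    and inputs: "\<And>y T. norm y + 1 \<le> R \<Longrightarrow> 0 \<le> T \<Longrightarrow> T < Tu \<Longrightarrow>
       norm (V y T) \<le> Mu \<and> norm (V y T) \<le> Km * norm y \<and> norm (uc y - V y T) \<le> \<rho> T * norm y"
  shows "\<exists>K Ts \<rho>'. K > 0 \<and> Ts > 0 \<and> class_K_inf \<rho>' \<and>
     (\<forall>x y T. norm x + 1 \<le> R \<longrightarrow> norm y + 1 \<le> R \<longrightarrow> 0 < T \<longrightarrow> T < Ts \<longrightarrow>
        norm (ode_flow (\<lambda>v. f v (uc v)) x T - ode_flow (\<lambda>v. f v (V y T)) y T)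
          \<le> (1 + K * T) * norm (x - y) + T * \<rho>' T * max (norm x) (norm y))"
proof -
  define K where "K = 2 * (Lf * (1 + Lc))"
  define \<rho>' where "\<rho>' T = 4 * Lf\<^sup>2 * Lc * (1 + Km) * T + 2 * Lf * \<rho> T" for T
  have \<rho>': "class_K_inf \<rho>'" unfolding \<rho>'_def
    using Lf_pos Lc_pos Km by (intro class_K_inf_add_linear[OF \<rho>]) auto
  have "0 < time_rate"
    unfolding time_rate_def using Lf_pos Lc_nonneg R_nonneg Mu_nonneg by (simp add: add_pos_nonneg)
  define Ts where "Ts = min Tu (1 / (2 * time_rate))"
  have "norm (ode_flow (\<lambda>v. f v (uc v)) x T - ode_flow (\<lambda>v. f v (V y T)) y T)
      \<le> (1 + K * T) * norm (x - y) + T * \<rho>' T * max (norm x) (norm y)"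
    if x: "norm x + 1 \<le> R" and y: "norm y + 1 \<le> R" and T: "0 < T" "T < Ts" for x y T
  proof -
    have "time_rate * T \<le> 1/2"
      using T \<open>0 < time_rate\<close> unfolding Ts_def by (simp add: less_divide_eq mult.commute)
    then have "norm (ode_flow (\<lambda>v. f v (uc v)) x T - ode_flow (\<lambda>v. f v (V y T)) y T)
        \<le> (1 + K * T) * norm (x - y) + T * \<rho>' T * norm y"
      unfolding \<rho>'_def K_def using inputs[OF y] T unfolding Ts_def
      by (intro closed_open_flow_estimate[OF x y]) auto
    also have "\<dots> \<le> (1 + K * T) * norm (x - y) + T * \<rho>' T * max (norm x) (norm y)"
      using class_K_inf_nonneg[OF \<rho>', of T] T by (intro add_left_mono mult_left_mono) auto
    finally show ?thesis .
  qed
  moreover have "0 < K" "0 < Ts"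
    unfolding K_def Ts_def using Lf_pos Lc_nonneg Tu \<open>0 < time_rate\<close> by auto
  ultimately show ?thesis using \<rho>' by blast
qed

end

lemma StL_linear_bound:
  assumes "StL U" "0 \<le> M"
  obtains K T0 where "0 < K" "0 < T0"
    "\<And>y T. norm y \<le> M \<Longrightarrow> 0 \<le> T \<Longrightarrow> T < T0 \<Longrightarrow> norm (U y T) \<le> K * norm y"
proof -
  obtain K T0 :: "real \<Rightarrow> real" where "\<forall>M\<ge>0. K M > 0 \<and> T0 M > 0 \<and>
        (\<forall>T. 0 \<le> T \<and> T < T0 M \<longrightarrow> U 0 T = 0 \<and>
           (\<forall>x y. norm x \<le> M \<longrightarrow> norm y \<le> M \<longrightarrow> norm (U x T - U y T) \<le> K M * norm (x - y)))"
    using assms(1) unfolding StL_def by blast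
  then have "K M > 0" "T0 M > 0" and bound: "\<And>T. 0 \<le> T \<Longrightarrow> T < T0 M \<Longrightarrow> U 0 T = 0 \<and>
           (\<forall>x y. norm x \<le> M \<longrightarrow> norm y \<le> M \<longrightarrow> norm (U x T - U y T) \<le> K M * norm (x - y))"
    using assms(2) by auto
  have "norm (U y T) \<le> K M * norm y" if "norm y \<le> M" "0 \<le> T" "T < T0 M" for y T
  proof -
    have "U 0 T = 0" and lip: "\<forall>x y. norm x \<le> M \<longrightarrow> norm y \<le> M \<longrightarrow>
        norm (U x T - U y T) \<le> K M * norm (x - y)"
      using bound[OF that(2,3)] by auto
    then show ?thesis using lip[rule_format, of y 0] that(1) assms(2) by simp
  qed
  then show ?thesis using that \<open>K M > 0\<close> \<open>T0 M > 0\<close> by blast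
qed

lemma lipschitz_feedback_system_from_assumptions:
  assumes "assumption1 f" "assumption2 uc" "0 \<le> R" "0 \<le> B"
  obtains Mu Lf Lc where "lipschitz_feedback_system f uc R Mu Lf Lc" "B \<le> Mu"
proof -
  obtain Lc where Lc: "0 < Lc"
    "\<forall>x y. norm x \<le> R \<longrightarrow> norm y \<le> R \<longrightarrow> norm (uc x - uc y) \<le> Lc * norm (x - y)"
    using assms(2,3) unfolding assumption2_def by blast
  define Mu where "Mu = Lc * R + B"
  have "0 \<le> Mu" unfolding Mu_def using Lc(1) assms(3,4) by simp
  obtain Lf where Lf: "0 < Lf" "\<forall>x y u v. norm x \<le> R \<longrightarrow> norm y \<le> R \<longrightarrow> norm u \<le> Mu \<longrightarrow>
       norm v \<le> Mu \<longrightarrow> norm (f x u - f y v) \<le> Lf * (norm (x - y) + norm (u - v))"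
    using assms(1,3) \<open>0 \<le> Mu\<close> unfolding assumption1_def by blast
  have "lipschitz_feedback_system f uc R Mu Lf Lc"
  proof
    show "f 0 0 = 0" using assms(1) unfolding assumption1_def by simp
    show "uc 0 = 0" using assms(2) unfolding assumption2_def by simp
    show "Lc * R \<le> Mu" unfolding Mu_def using assms(4) by simp
  qed (use Lf Lc assms(3) in auto)
  moreover have "B \<le> Mu" unfolding Mu_def using Lc(1) assms(3) by simp
  ultimately show ?thesis by (rule that)
qed

theorem proposition1:
  fixes f :: "'a::euclidean_space \<Rightarrow> 'b::euclidean_space \<Rightarrow> 'a"
    and U :: "'a \<Rightarrow> real \<Rightarrow> 'b"
  assumes "assumption1 f"
    and "assumption2 (\<lambda>x. U x 0)"
    and "StL U"
    and "StC (\<lambda>x T. U x 0) U"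
  shows "EPC (\<lambda>x T. ode_flow (\<lambda>z. f z (U z 0)) x T) (\<lambda>x T. F_e f x (U x T) T)"
  unfolding EPC_def F_e_def
proof (intro allI impI)
  fix M :: real assume "0 \<le> M"
  obtain Km Tl where Km: "0 < Km" "0 < Tl"
    "\<And>y T. norm y \<le> M \<Longrightarrow> 0 \<le> T \<Longrightarrow> T < Tl \<Longrightarrow> norm (U y T) \<le> Km * norm y"
    using StL_linear_bound[OF assms(3) \<open>0 \<le> M\<close>] by blast
  obtain \<rho> Tc where \<rho>: "class_K_inf \<rho>" "0 < Tc"
    "\<forall>x T. norm x \<le> M \<longrightarrow> 0 \<le> T \<longrightarrow> T < Tc \<longrightarrow> norm (U x 0 - U x T) \<le> \<rho> T * norm x"
    using assms(4) \<open>0 \<le> M\<close> unfolding StC_def by blast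
  have "0 \<le> M + 1" "0 \<le> Km * M" using \<open>0 \<le> M\<close> Km(1) by simp_all
  then obtain Mu Lf Lc where "lipschitz_feedback_system f (\<lambda>x. U x 0) (M + 1) Mu Lf Lc" "Km * M \<le> Mu"
    by (rule lipschitz_feedback_system_from_assumptions[OF assms(1,2)])
  interpret lipschitz_feedback_system f "\<lambda>x. U x 0" "M + 1" Mu Lf Lc by fact
  have "norm (U y T) \<le> Mu \<and> norm (U y T) \<le> Km * norm y \<and> norm (U y 0 - U y T) \<le> \<rho> T * norm y"
    if "norm y + 1 \<le> M + 1" "0 \<le> T" "T < min Tl Tc" for y T
  proof -
    have y: "norm y \<le> M" using that(1) by simp
    have "Km * norm y \<le> Mu" using mult_left_mono[OF y less_imp_le[OF Km(1)]] \<open>Km * M \<le> Mu\<close> by simp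
    then show ?thesis using Km(3)[OF y] \<rho>(3) y that(2,3) by force
  qed
  from closed_open_flow_EPC_bound[where Tu = "min Tl Tc", OF less_imp_le[OF Km(1)] \<rho>(1) _ this] Km(2) \<rho>(2)
  show "\<exists>K Tstar \<rho>. K > 0 \<and> Tstar > 0 \<and> class_K_inf \<rho> \<and>
     (\<forall>x y T. norm x \<le> M \<longrightarrow> norm y \<le> M \<longrightarrow> 0 < T \<longrightarrow> T < Tstar \<longrightarrow>
        norm (ode_flow (\<lambda>z. f z (U z 0)) x T - ode_flow (\<lambda>z. f z (U y T)) y T)
          \<le> (1 + K * T) * norm (x - y) + T * \<rho> T * max (norm x) (norm y))"
    by simp
qed

end
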